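(* Let $\widehat{T}=\begin{bmatrix}\hat t_{11}&\hat t_{12}\\0&\hat t_{22}\end{bmatrix}$ be a real matrix with $\hat t_{11}>0$, $\hat t_{12}\ge 0$, $\hat t_{22}\ge 0$ and $\hat t_{11}^2\ge \hat t_{12}^2+\hat t_{22}^2$. Put $x=\hat t_{12}/\hat t_{11}$, $y=\hat t_{22}/\hat t_{11}$, and assume $x\neq 1$. Define $$\tan(2\varphi)=\frac{-2xy}{(y-x)(y+x)+1},\qquad \tan\varphi=\frac{\tan(2\varphi)}{1+\sqrt{1+\tan^2(2\varphi)}},\qquad \cos\varphi=\frac{1}{\sqrt{1+\tan^2\varphi}},\quad \sin\varphi=\tan\varphi\cos\varphi,$$ $$\tanh\psi=-(x+y\tan\varphi).$$ Then the denominator of $\tan(2\varphi)$ is positive, $-1<\tan\varphi\le 0$, and $|\tanh\psi|<1$; hence $\cosh\psi=1/\sqrt{1-\tanh^2\psi}$ and $\sinh\psi=\tanh\psi\cosh\psi$ are well defined, and $$\begin{bmatrix}\cos\varphi&\sin\varphi\\-\sin\varphi&\cos\varphi\end{bmatrix}\widehat{T}\begin{bmatrix}\cosh\psi&\sinh\psi\\\sinh\psi&\cosh\psi\end{bmatrix}=\begin{bmatrix}\tilde\sigma_{11}'&0\\0&\tilde\sigma_{22}'\end{bmatrix},\qquad \tilde\sigma_{11}'=\frac{\cos\varphi}{\cosh\psi}\hat t_{11},\quad \tilde\sigma_{22}'=\frac{\cosh\psi}{\cos\varphi}\hat t_{22}.$$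
   Context: The left factor is a plane rotation (orthogonal) and the right factor is a hyperbolic rotation, which is $\widehat{J}$-orthogonal for $\widehat{J}=\mathrm{diag}(1,-1)$ or $\mathrm{diag}(-1,1)$ (i.e. $\widehat V^T\widehat J\widehat V=\widehat J$). This is the $2\times 2$ hyperbolic SVD of $\widehat T$ in the hyperbolic (indefinite $\widehat J$) case with $\widehat T$ upper triangular. *)

theory Defs
  imports "HOL-Analysis.Analysis"
begin

definition mat2 :: "real \<Rightarrow> real \<Rightarrow> real \<Rightarrow> real \<Rightarrow> real^2^2" where
  "mat2 a b c d = (\<chi> i j. if i = 1 then (if j = 1 then a else b)
                            else (if j = 1 then c else d))"

end

theory Submission
  imports Defs
begin

text \<open>The rotation angle \<open>\<phi>\<close> is chosen so that \<open>2 tan \<phi> = tan(2\<phi>) (1 - tan\<^sup>2 \<phi>)\<close> makes the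
  (2,1) entry of the product vanish, and \<open>tanh \<psi> = -(x + y tan \<phi>)\<close> is exactly what kills the
  (1,2) entry.  The diagonal entries then collapse via \<open>cos\<^sup>2 \<phi> (1 + tan\<^sup>2 \<phi>) = 1\<close> and
  \<open>cosh\<^sup>2 \<psi> (1 - tanh\<^sup>2 \<psi>) = 1\<close>.  The bounds follow from \<open>0 \<le> x < 1\<close>, \<open>0 \<le> y \<le> 1\<close>, and
  \<open>tan \<phi>\<close> being the half-angle tangent of a nonpositive number.\<close>

lemma mat2_mult:
  "mat2 a b c d ** mat2 a' b' c' d' =
     mat2 (a * a' + b * c') (a * b' + b * d') (c * a' + d * c') (c * b' + d * d')"
  unfolding matrix_matrix_mult_def mat2_def by (simp add: vec_eq_iff forall_2 sum_2)

definition half_tan :: "real \<Rightarrow> real" where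
  "half_tan t = t / (1 + sqrt (1 + t\<^sup>2))"

lemma abs_less_sqrt_one_plus_square: "\<bar>t\<bar> < sqrt (1 + t\<^sup>2)"
  by (metis real_sqrt_abs real_sqrt_less_mono less_add_one add.commute power2_abs)

lemma half_tan_double: "2 * half_tan t = t * (1 - (half_tan t)\<^sup>2)"
proof -
  define S where "S = sqrt (1 + t\<^sup>2)"
  have S_pos: "S > 0" unfolding S_def by (simp add: add_pos_nonneg)
  have "t\<^sup>2 = (S - 1) * (1 + S)"
    unfolding S_def by (simp add: algebra_simps)
  then have "(t / (1 + S))\<^sup>2 = (S - 1) / (1 + S)"
    using S_pos by (simp add: power_divide power2_eq_square)
  then have "(1 + S) * (1 - (t / (1 + S))\<^sup>2) = 2"
    using S_pos by (simp add: field_simps)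
  then show ?thesis
    unfolding half_tan_def S_def[symmetric] using S_pos by (simp add: field_simps)
qed

lemma abs_half_tan_less_1: "\<bar>half_tan t\<bar> < 1"
  using abs_less_sqrt_one_plus_square[of t]
  by (simp add: half_tan_def abs_divide divide_less_eq add_pos_nonneg)

lemma half_tan_nonpos_iff: "half_tan t \<le> 0 \<longleftrightarrow> t \<le> 0"
proof -
  have "1 + sqrt (1 + t\<^sup>2) > 0" by (simp add: add_pos_nonneg)
  then show ?thesis by (simp add: half_tan_def divide_le_0_iff)
qed

lemma sqrt_one_plus_square_normalizes:
  "(1 / sqrt (1 + u\<^sup>2))\<^sup>2 * (1 + u\<^sup>2) = 1"
proof -
  have "1 + u\<^sup>2 > 0" by (simp add: add_pos_nonneg)
  then show ?thesis by (simp add: power_divide)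
qed

lemma sqrt_one_minus_square_normalizes:
  assumes "\<bar>v\<bar> < 1"
  shows "(1 / sqrt (1 - v\<^sup>2))\<^sup>2 * (1 - v\<^sup>2) = 1"
  using assms abs_square_less_1[of v] by (simp add: power_divide)

text \<open>Here \<open>u, c, v, ch\<close> stand for \<open>tan \<phi>, cos \<phi>, tanh \<psi>, cosh \<psi>\<close>.\<close>
lemma rotation_hyperbolic_diagonalize:
  fixes c u ch v x y t :: real
  assumes angle: "u * ((y - x) * (y + x) + 1) + x * y * (1 - u\<^sup>2) = 0"
    and v: "v = -(x + y * u)"
    and c: "c\<^sup>2 * (1 + u\<^sup>2) = 1" "c > 0"
    and ch: "ch\<^sup>2 * (1 - v\<^sup>2) = 1" "ch > 0"
  shows "mat2 c (u * c) (-(u * c)) c ** mat2 t (x * t) 0 (y * t) ** mat2 ch (v * ch) (v * ch) ch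
           = mat2 (c / ch * t) 0 0 (ch / c * (y * t))"
proof -
  have e11: "c * t * ch + (c * (x * t) + u * c * (y * t)) * (v * ch) = c / ch * t"
  proof -
    have "c * t * ch + (c * (x * t) + u * c * (y * t)) * (v * ch) = c * t * ch * (1 - v\<^sup>2)"
      unfolding v by (simp add: algebra_simps power2_eq_square)
    also have "\<dots> = c * t / ch * (ch\<^sup>2 * (1 - v\<^sup>2))"
      using ch(2) by (simp add: power2_eq_square)
    also have "\<dots> = c / ch * t"
      using ch(1) by simp
    finally show ?thesis .
  qed
  have e12: "c * t * (v * ch) + (c * (x * t) + u * c * (y * t)) * ch = 0"
    unfolding v by (simp add: algebra_simps)
  have e21: "(c * (y * t) - u * c * (x * t)) * (v * ch) - u * c * t * ch = 0"
  proof -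
    have "(c * (y * t) - u * c * (x * t)) * (v * ch) - u * c * t * ch
          = - c * t * ch * (u * ((y - x) * (y + x) + 1) + x * y * (1 - u\<^sup>2))"
      unfolding v by (simp add: algebra_simps power2_eq_square)
    then show ?thesis using angle by simp
  qed
  have e22: "(c * (y * t) - u * c * (x * t)) * ch - u * c * t * (v * ch) = ch / c * (y * t)"
  proof -
    have "(c * (y * t) - u * c * (x * t)) * ch - u * c * t * (v * ch)
          = c * ch * (y * t) * (1 + u\<^sup>2)"
      unfolding v by (simp add: algebra_simps power2_eq_square)
    also have "\<dots> = ch * (y * t) / c * (c\<^sup>2 * (1 + u\<^sup>2))"
      using c(2) by (simp add: power2_eq_square)
    also have "\<dots> = ch / c * (y * t)"
      using c(1) by simp
    finally show ?thesis .
  qed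
  have "mat2 c (u * c) (-(u * c)) c ** mat2 t (x * t) 0 (y * t) ** mat2 ch (v * ch) (v * ch) ch
        = mat2 (c * t * ch + (c * (x * t) + u * c * (y * t)) * (v * ch))
               (c * t * (v * ch) + (c * (x * t) + u * c * (y * t)) * ch)
               ((c * (y * t) - u * c * (x * t)) * (v * ch) - u * c * t * ch)
               ((c * (y * t) - u * c * (x * t)) * ch - u * c * t * (v * ch))"
    by (simp add: mat2_mult algebra_simps)
  then show ?thesis
    by (simp only: e11 e12 e21 e22)
qed

lemma half_tan_of_quotient:
  fixes q D :: real
  assumes "D > 0" and "q \<le> 0"
  shows "-1 < half_tan (q / D)" "half_tan (q / D) \<le> 0"
    and "2 * half_tan (q / D) * D = q * (1 - (half_tan (q / D))\<^sup>2)"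
proof -
  show "-1 < half_tan (q / D)"
    using abs_half_tan_less_1[of "q / D"] by linarith
  show "half_tan (q / D) \<le> 0"
    using assms by (simp add: half_tan_nonpos_iff divide_nonpos_pos)
  show "2 * half_tan (q / D) * D = q * (1 - (half_tan (q / D))\<^sup>2)"
    using half_tan_double[of "q / D"] assms(1) by (simp add: field_simps)
qed

lemma ratio_le_1_of_sum_squares_le:
  fixes a b d :: real
  assumes "a > 0" and "b\<^sup>2 + d\<^sup>2 \<le> a\<^sup>2"
  shows "b / a \<le> 1"
proof -
  have "b\<^sup>2 \<le> a\<^sup>2"
    using assms(2) zero_le_power2[of d] by linarith
  then have "\<bar>b\<bar> \<le> \<bar>a\<bar>"
    by (simp add: abs_le_square_iff)
  then show ?thesis
    using assms(1) by simp
qed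

lemma one_plus_diff_times_sum_pos:
  fixes x y :: real
  assumes "\<bar>x\<bar> < 1"
  shows "(y - x) * (y + x) + 1 > 0"
proof -
  have "x\<^sup>2 < 1"
    using assms by (simp add: abs_square_less_1)
  moreover have "(y - x) * (y + x) + 1 = 1 - x\<^sup>2 + y\<^sup>2"
    by (simp add: algebra_simps power2_eq_square)
  ultimately show ?thesis
    using zero_le_power2[of y] by linarith
qed

lemma abs_add_mult_less_1:
  fixes x y u :: real
  assumes "0 \<le> x" "x < 1" "0 \<le> y" "y \<le> 1" "-1 < u" "u \<le> 0"
  shows "\<bar>x + y * u\<bar> < 1"
proof -
  have "u \<le> y * u" "y * u \<le> 0"
    using assms by (simp_all add: mult_le_cancel_right1 mult_nonneg_nonpos)
  then show ?thesis
    using assms by simp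
qed

theorem theorem2p2:
  fixes t11 t12 t22 :: real
  assumes "t11 > 0" and "t12 \<ge> 0" and "t22 \<ge> 0"
    and "t11\<^sup>2 \<ge> t12\<^sup>2 + t22\<^sup>2"
  defines "x \<equiv> t12 / t11"
  defines "y \<equiv> t22 / t11"
  assumes "x \<noteq> 1"
  defines "tan2 \<equiv> (-2 * x * y) / ((y - x) * (y + x) + 1)"
  defines "tn \<equiv> tan2 / (1 + sqrt (1 + tan2\<^sup>2))"
  defines "c \<equiv> 1 / sqrt (1 + tn\<^sup>2)"
  defines "s \<equiv> tn * c"
  defines "th \<equiv> -(x + y * tn)"
  defines "ch \<equiv> 1 / sqrt (1 - th\<^sup>2)"
  defines "sh \<equiv> th * ch"
  shows "(y - x) * (y + x) + 1 > 0
      \<and> (-1 < tn \<and> tn \<le> 0)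
      \<and> \<bar>th\<bar> < 1
      \<and> mat2 c s (-s) c ** mat2 t11 t12 0 t22 ** mat2 ch sh sh ch
           = mat2 (c / ch * t11) 0 0 (ch / c * t22)"
proof -
  define D where "D = (y - x) * (y + x) + 1"
  have x0: "x \<ge> 0" and y0: "y \<ge> 0"
    using assms(1-3) by (simp_all add: x_def y_def)
  have x1: "x < 1" and y1: "y \<le> 1"
    using ratio_le_1_of_sum_squares_le[of t11 t12 t22] ratio_le_1_of_sum_squares_le[of t11 t22 t12]
      assms(1,4) \<open>x \<noteq> 1\<close> by (simp_all add: x_def y_def add.commute)
  have D_pos: "D > 0"
    unfolding D_def using x0 x1 by (simp add: one_plus_diff_times_sum_pos)
  have tn: "tn = half_tan ((-2 * x * y) / D)"
    by (simp add: tn_def tan2_def half_tan_def D_def)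
  have "-2 * x * y \<le> 0"
    using x0 y0 by simp
  note tn_facts = half_tan_of_quotient[OF D_pos this, folded tn]
  note tn_bounds = tn_facts(1,2)
  have angle: "tn * D + x * y * (1 - tn\<^sup>2) = 0"
    using tn_facts(3) by (simp add: algebra_simps)
  have th_bound: "\<bar>th\<bar> < 1"
    unfolding th_def using abs_add_mult_less_1[OF x0 x1 y0 y1 tn_bounds] by simp
  have c_pos: "c > 0" and c_norm: "c\<^sup>2 * (1 + tn\<^sup>2) = 1"
    using sqrt_one_plus_square_normalizes[of tn] by (simp_all add: c_def add_pos_nonneg)
  have ch_pos: "ch > 0" and ch_norm: "ch\<^sup>2 * (1 - th\<^sup>2) = 1"
    using sqrt_one_minus_square_normalizes[OF th_bound] abs_square_less_1[of th] th_bound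
    by (simp_all add: ch_def)
  have "x * t11 = t12" "y * t11 = t22"
    using assms(1) by (simp_all add: x_def y_def)
  then have "mat2 c s (-s) c ** mat2 t11 t12 0 t22 ** mat2 ch sh sh ch
      = mat2 (c / ch * t11) 0 0 (ch / c * t22)"
    using rotation_hyperbolic_diagonalize[OF angle[unfolded D_def]
        th_def[THEN meta_eq_to_obj_eq] c_norm c_pos ch_norm ch_pos, of t11]
    by (simp only: s_def sh_def)
  then show ?thesis
    using D_pos tn_bounds th_bound by (simp add: D_def)
qed

end
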